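(* Let $k\in\mathbb{N}$ and $\tilde P,\tilde Q\in\mathbb{R}[x]$. There exist $P,Q\in\mathbb{C}[x]$ satisfying (i) $\deg P\le k$, $\deg Q\le k-1$; (ii) $P$ has parity $(k\bmod 2)$ and $Q$ has parity $(k-1\bmod 2)$; (iii) $|P(x)|^2+(1-x^2)|Q(x)|^2=1$ for all $x\in[-1,1]$; and moreover $\Re[P]=\tilde P$, $\Re[Q]=\tilde Q$, if and only if $\tilde P,\tilde Q$ satisfy (i) and (ii) (with $\tilde P,\tilde Q$ in place of $P,Q$) and (vi) for all $x\in[-1,1]$: $\tilde P(x)^2+(1-x^2)\tilde Q(x)^2\le 1$.
   Context: For $P(x)=\sum_j a_jx^j\in\mathbb{C}[x]$, $\Re[P](x):=\sum_j \Re(a_j)x^j$. A polynomial is even (odd) if all its odd-power (even-power) coefficients vanish; the zero polynomial is both; parity $z$ means even if $z$ even and odd if $z$ odd. *)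

theory Defs
  imports "HOL-Analysis.Analysis" "HOL-Computational_Algebra.Polynomial"
begin

text \<open>Degree bound with the convention deg 0 = -infinity: all coefficients of
  index exceeding d vanish (d may be negative, e.g. k - 1 for k = 0).\<close>
definition deg_le :: "'a::zero poly \<Rightarrow> int \<Rightarrow> bool" where
  "deg_le p d \<longleftrightarrow> (\<forall>j. int j > d \<longrightarrow> coeff p j = 0)"

definition even_poly :: "'a::zero poly \<Rightarrow> bool" where
  "even_poly p \<longleftrightarrow> (\<forall>j. odd j \<longrightarrow> coeff p j = 0)"

definition odd_poly :: "'a::zero poly \<Rightarrow> bool" where
  "odd_poly p \<longleftrightarrow> (\<forall>j. even j \<longrightarrow> coeff p j = 0)"

definition has_parity :: "'a::zero poly \<Rightarrow> int \<Rightarrow> bool" where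
  "has_parity p z \<longleftrightarrow> (if even z then even_poly p else odd_poly p)"

definition Re_poly :: "complex poly \<Rightarrow> real poly" where
  "Re_poly p = map_poly Re p"

end

theory Submission
  imports Defs "HOL-Computational_Algebra.Fundamental_Theorem_Algebra"
begin

text \<open>Writing \<open>P = P\<^sub>0 + i A\<close> and \<open>Q = Q\<^sub>0 + i B\<close> with real \<open>A\<close>, \<open>B\<close>, the identity becomes
  \<open>A\<^sup>2 + (1 - x\<^sup>2) B\<^sup>2 = R\<close> where \<open>R = 1 - P\<^sub>0\<^sup>2 - (1 - x\<^sup>2) Q\<^sub>0\<^sup>2\<close> is even and nonnegative on \<open>[-1, 1]\<close>.
  So \<open>R(x) = S(x\<^sup>2)\<close> with \<open>S \<ge> 0\<close> on \<open>[0, 1]\<close>, and \<open>S\<close> splits into factors \<open>t - r\<close> with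
  \<open>r \<notin> (0, 1)\<close> (up to sign), \<open>(t - r)\<^sup>2\<close> with \<open>r \<in> (0, 1)\<close> (interior roots have even multiplicity)
  and \<open>|t - z|\<^sup>2\<close> with \<open>z\<close> nonreal. Each factor, evaluated at \<open>t = x\<^sup>2\<close>, is of the form
  \<open>A\<^sup>2 + (1 - x\<^sup>2) B\<^sup>2\<close> with the right degrees and parities, and such representations multiply by
  Brahmagupta's identity \<open>(a\<^sup>2 + w b\<^sup>2)(c\<^sup>2 + w d\<^sup>2) = (a c + w b d)\<^sup>2 + w (a d - b c)\<^sup>2\<close>.\<close>

lemma coeff_pcompose_neg:
  fixes p :: "'a::comm_ring_1 poly"
  shows "coeff (p \<circ>\<^sub>p [:0, -1:]) j = (-1) ^ j * coeff p j"
proof (induction p arbitrary: j)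
  case (pCons a p)
  then show ?case
    by (cases j) (auto simp: pcompose_pCons mult_pCons_left coeff_pCons)
qed simp

lemma coeff_pcompose_x_sq:
  fixes p :: "'a::comm_semiring_1 poly"
  shows "coeff (p \<circ>\<^sub>p [:0, 0, 1:]) j = (if even j then coeff p (j div 2) else 0)"
proof (induction p arbitrary: j)
  case (pCons a p)
  then show ?case
    by (cases j)
      (auto simp: pcompose_pCons mult_pCons_left coeff_pCons split: nat.split elim!: evenE oddE)
qed simp

lemma pcompose_neg_eq_smult_iff:
  fixes p :: "real poly"
  shows "p \<circ>\<^sub>p [:0, -1:] = smult ((-1) ^ m) p \<longleftrightarrow> (\<forall>j. even j \<noteq> even m \<longrightarrow> coeff p j = 0)"
proof -
  have "(-1) ^ j * c = (-1) ^ m * c \<longleftrightarrow> (even j \<noteq> even m \<longrightarrow> c = 0)" for j m and c :: real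
    by (cases "even j"; cases "even m") auto
  then show ?thesis
    by (simp add: poly_eq_iff coeff_pcompose_neg)
qed

lemma has_parity_iff_pcompose_neg:
  fixes p :: "real poly"
  shows "has_parity p (int m mod 2) \<longleftrightarrow> p \<circ>\<^sub>p [:0, -1:] = smult ((-1) ^ m) p"
  unfolding pcompose_neg_eq_smult_iff has_parity_def even_poly_def odd_poly_def by auto

lemma int_minus_one_mod_2: "(int k - 1) mod 2 = int (Suc k) mod 2"
  by presburger

lemma even_poly_eq_pcompose_x_sq:
  fixes R :: "'a::comm_semiring_1 poly"
  assumes "even_poly R"
  obtains S where "R = S \<circ>\<^sub>p [:0, 0, 1:]" "\<And>j. coeff S j = coeff R (2 * j)"
proof -
  define S where "S = Poly (map (\<lambda>j. coeff R (2 * j)) [0..<Suc (degree R)])"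
  have coeff_S: "coeff S j = coeff R (2 * j)" for j
    by (cases "j < Suc (degree R)") (auto simp: S_def nth_default_def coeff_eq_0 simp del: upt_Suc)
  have "R = S \<circ>\<^sub>p [:0, 0, 1:]"
    using assms by (intro poly_eqI) (auto simp: coeff_pcompose_x_sq coeff_S even_poly_def)
  then show thesis using coeff_S by (rule that)
qed

lemma deg_le_iff: "deg_le p d \<longleftrightarrow> p = 0 \<or> int (degree p) \<le> d"
proof
  assume "deg_le p d"
  then show "p = 0 \<or> int (degree p) \<le> d"
    unfolding deg_le_def by (metis leading_coeff_0_iff not_le)
qed (auto simp: deg_le_def intro: coeff_eq_0)

lemma deg_le_add: "deg_le p d \<Longrightarrow> deg_le q d \<Longrightarrow> deg_le (p + q) d"
  by (simp add: deg_le_def)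

lemma deg_le_diff:
  fixes p q :: "'a::ab_group_add poly"
  shows "deg_le p d \<Longrightarrow> deg_le q d \<Longrightarrow> deg_le (p - q) d"
  by (simp add: deg_le_def)

lemma deg_le_mult:
  fixes p q :: "'a::idom poly"
  shows "deg_le p a \<Longrightarrow> deg_le q b \<Longrightarrow> deg_le (p * q) (a + b)"
  unfolding deg_le_iff by (cases "p = 0 \<or> q = 0") (auto simp: degree_mult_eq)

lemma deg_le_one_minus_x_sq: "deg_le (1 - [:0, 0, 1:]) 2"
  unfolding deg_le_def by (auto simp: coeff_pCons coeff_1 split: nat.split)

definition parity_sos :: "nat \<Rightarrow> real poly \<Rightarrow> bool" where
  "parity_sos k R \<longleftrightarrow> (\<exists>A B. deg_le A (int k) \<and> deg_le B (int k - 1) \<and>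
     A \<circ>\<^sub>p [:0, -1:] = smult ((-1) ^ k) A \<and> B \<circ>\<^sub>p [:0, -1:] = smult ((-1) ^ Suc k) B \<and>
     R = A\<^sup>2 + (1 - [:0, 0, 1:]) * B\<^sup>2)"

lemma parity_sosI:
  assumes "deg_le A (int k)" "deg_le B (int k - 1)"
    and "A \<circ>\<^sub>p [:0, -1:] = smult ((-1) ^ k) A" "B \<circ>\<^sub>p [:0, -1:] = smult ((-1) ^ Suc k) B"
    and "\<And>x. poly R x = (poly A x)\<^sup>2 + (1 - x\<^sup>2) * (poly B x)\<^sup>2"
  shows "parity_sos k R"
proof -
  have "R = A\<^sup>2 + (1 - [:0, 0, 1:]) * B\<^sup>2"
    using assms(5) by (intro poly_ext) (simp add: power2_eq_square)
  with assms(1-4) show ?thesis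
    unfolding parity_sos_def by blast
qed

lemma parity_sos_mult:
  assumes "parity_sos p R" "parity_sos q R'"
  shows "parity_sos (p + q) (R * R')"
proof -
  let ?w = "1 - [:0, 0, 1:] :: real poly"
  from assms obtain A B C D where
    A: "deg_le A (int p)" "A \<circ>\<^sub>p [:0, -1:] = smult ((-1) ^ p) A" and
    B: "deg_le B (int p - 1)" "B \<circ>\<^sub>p [:0, -1:] = smult ((-1) ^ Suc p) B" and
    C: "deg_le C (int q)" "C \<circ>\<^sub>p [:0, -1:] = smult ((-1) ^ q) C" and
    D: "deg_le D (int q - 1)" "D \<circ>\<^sub>p [:0, -1:] = smult ((-1) ^ Suc q) D" and
    R: "R = A\<^sup>2 + ?w * B\<^sup>2" "R' = C\<^sup>2 + ?w * D\<^sup>2"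
    unfolding parity_sos_def by metis
  have w: "?w \<circ>\<^sub>p [:0, -1:] = ?w"
    by (simp add: pcompose_pCons pcompose_diff pcompose_1)
  have "R * R' = (A * C + ?w * B * D)\<^sup>2 + ?w * (A * D - B * C)\<^sup>2"
    unfolding R by (simp add: algebra_simps power2_eq_square)
  moreover have "deg_le (A * C + ?w * B * D) (int (p + q))"
  proof (rule deg_le_add)
    show "deg_le (A * C) (int (p + q))"
      using deg_le_mult[OF A(1) C(1)] by simp
    show "deg_le (?w * B * D) (int (p + q))"
      using deg_le_mult[OF deg_le_mult[OF deg_le_one_minus_x_sq B(1)] D(1)] by simp
  qed
  moreover have "deg_le (A * D - B * C) (int (p + q) - 1)"
    using deg_le_mult[OF A(1) D(1)] deg_le_mult[OF B(1) C(1)]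
    by (intro deg_le_diff) (simp_all add: algebra_simps)
  moreover have "(A * C + ?w * B * D) \<circ>\<^sub>p [:0, -1:] = smult ((-1) ^ (p + q)) (A * C + ?w * B * D)"
    by (simp only: pcompose_add pcompose_mult A(2) B(2) C(2) D(2) w power_add
        mult_smult_left mult_smult_right smult_add_right smult_smult) (simp add: algebra_simps)
  moreover have "(A * D - B * C) \<circ>\<^sub>p [:0, -1:] = smult ((-1) ^ Suc (p + q)) (A * D - B * C)"
    by (simp only: pcompose_diff pcompose_mult A(2) B(2) C(2) D(2) power_add power_Suc
        mult_smult_left mult_smult_right smult_diff_right smult_smult) (simp add: algebra_simps)
  ultimately show ?thesis
    unfolding parity_sos_def by blast
qed

lemma parity_sos_const: "0 \<le> c \<Longrightarrow> parity_sos 0 [:c:]"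
  by (rule parity_sosI[where A = "[:sqrt c:]" and B = 0])
    (auto simp: deg_le_def coeff_pCons split: nat.split)

lemma parity_sos_linear:
  assumes "0 \<le> c" "0 \<le> c + d"
  shows "parity_sos 1 ([:c, d:] \<circ>\<^sub>p [:0, 0, 1:])"
proof (rule parity_sosI[where A = "[:0, sqrt (c + d):]" and B = "[:sqrt c:]"])
  fix x :: real
  show "poly ([:c, d:] \<circ>\<^sub>p [:0, 0, 1:]) x
      = (poly [:0, sqrt (c + d):] x)\<^sup>2 + (1 - x\<^sup>2) * (poly [:sqrt c:] x)\<^sup>2"
    using assms by (simp add: poly_pcompose power_mult_distrib power2_eq_square algebra_simps)
qed (auto simp: deg_le_def coeff_pCons pcompose_pCons split: nat.split)

lemma parity_sos_mono:
  assumes "parity_sos k R" "k \<le> k'"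
  shows "parity_sos k' R"
  using assms(2)
proof (induction k' rule: dec_induct)
  case (step n)
  have "parity_sos 1 1"
    using parity_sos_linear[of 1 0] by (simp add: pcompose_pCons one_pCons)
  with step.IH show ?case
    using parity_sos_mult by fastforce
qed (fact assms(1))

lemma parity_sos_quadratic:
  "parity_sos 2 ([:(cmod z)\<^sup>2, -2 * Re z, 1:] \<circ>\<^sub>p [:0, 0, 1:])"
proof -
  \<comment> \<open>\<open>(\<alpha> x\<^sup>2 - \<bar>z\<bar>)\<^sup>2 + (1 - x\<^sup>2)(\<beta> x)\<^sup>2\<close> has the right coefficients iff \<open>\<alpha> - \<bar>z\<bar> = \<bar>z - 1\<bar>\<close> and \<open>\<beta>\<^sup>2 = \<alpha>\<^sup>2 - 1\<close>;
    \<open>\<alpha> \<ge> 1\<close> is the triangle inequality.\<close>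
  define \<alpha> where "\<alpha> = cmod z + cmod (z - 1)"
  define \<beta> where "\<beta> = sqrt (\<alpha>\<^sup>2 - 1)"
  have "1 \<le> \<alpha>"
    using norm_triangle_ineq4[of z "z - 1"] by (simp add: \<alpha>_def)
  then have \<beta>: "\<beta>\<^sup>2 = \<alpha>\<^sup>2 - 1"
    by (simp add: \<beta>_def one_le_power)
  have "(\<alpha> - cmod z)\<^sup>2 = (cmod (z - 1))\<^sup>2"
    by (simp add: \<alpha>_def)
  also have "\<dots> = (cmod z)\<^sup>2 - 2 * Re z + 1"
    by (simp add: cmod_power2 power2_diff)
  finally have "(\<alpha> - cmod z)\<^sup>2 = (cmod z)\<^sup>2 - 2 * Re z + 1" .
  then have "\<alpha>\<^sup>2 - 2 * \<alpha> * cmod z = 1 - 2 * Re z"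
    by (simp add: power2_eq_square algebra_simps)
  with \<beta> have lead: "\<alpha>\<^sup>2 - \<beta>\<^sup>2 = 1" and middle: "\<beta>\<^sup>2 - 2 * \<alpha> * cmod z = - 2 * Re z"
    by simp_all
  show ?thesis
  proof (rule parity_sosI[where A = "[:- cmod z, 0, \<alpha>:]" and B = "[:0, \<beta>:]"])
    fix x :: real
    have "(poly [:- cmod z, 0, \<alpha>:] x)\<^sup>2 + (1 - x\<^sup>2) * (poly [:0, \<beta>:] x)\<^sup>2
        = (\<alpha>\<^sup>2 - \<beta>\<^sup>2) * x ^ 4 + (\<beta>\<^sup>2 - 2 * \<alpha> * cmod z) * x\<^sup>2 + (cmod z)\<^sup>2"
      by (simp add: power2_eq_square power4_eq_xxxx algebra_simps)
    also have "\<dots> = x ^ 4 - 2 * Re z * x\<^sup>2 + (cmod z)\<^sup>2"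
      unfolding lead middle by simp
    also have "\<dots> = poly ([:(cmod z)\<^sup>2, -2 * Re z, 1:] \<circ>\<^sub>p [:0, 0, 1:]) x"
      by (simp add: poly_pcompose power2_eq_square power4_eq_xxxx algebra_simps)
    finally show "poly ([:(cmod z)\<^sup>2, -2 * Re z, 1:] \<circ>\<^sub>p [:0, 0, 1:]) x
        = (poly [:- cmod z, 0, \<alpha>:] x)\<^sup>2 + (1 - x\<^sup>2) * (poly [:0, \<beta>:] x)\<^sup>2" ..
  qed (auto simp: pcompose_pCons deg_le_def coeff_pCons split: nat.split)
qed

lemma poly_nonneg_on_Icc_off_point:
  fixes p :: "real poly"
  assumes "a < b" and nonneg: "\<And>t. t \<in> {a..b} \<Longrightarrow> t \<noteq> c \<Longrightarrow> 0 \<le> poly p t"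
  shows "\<forall>t\<in>{a..b}. 0 \<le> poly p t"
proof (intro ballI)
  fix t assume t: "t \<in> {a..b}"
  show "0 \<le> poly p t"
  proof (cases "t = c")
    case True
    show ?thesis
    proof (rule tendsto_lowerbound)
      show "(poly p \<longlongrightarrow> poly p t) (at t within {a..b})"
        by (simp add: continuous_within[symmetric] continuous_at_imp_continuous_at_within)
      show "\<forall>\<^sub>F s in at t within {a..b}. 0 \<le> poly p s"
        unfolding eventually_at_filter using nonneg True by (auto intro: always_eventually)
      show "at t within {a..b} \<noteq> bot"
        using assms(1) t by (simp add: trivial_limit_within)
    qed
  qed (use nonneg t in blast)
qed

lemma nonneg_poly_interior_root_double:
  fixes S :: "real poly"
  assumes "0 < r" "r < 1" "poly S r = 0" and nonneg: "\<forall>t\<in>{0..1}. 0 \<le> poly S t"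
  shows "[:-r, 1:]\<^sup>2 dvd S"
proof -
  obtain S1 where S1: "S = [:-r, 1:] * S1"
    using assms(3) by (auto simp: poly_eq_0_iff_dvd)
  have "poly S t = (t - r) * poly S1 t" for t
    by (simp add: S1 algebra_simps)
  with nonneg have sign: "0 \<le> (t - r) * poly S1 t" if "t \<in> {0..1}" for t
    using that by metis
  have "\<forall>t\<in>{r..1}. 0 \<le> poly S1 t"
  proof (rule poly_nonneg_on_Icc_off_point[where c = r])
    fix t assume "t \<in> {r..1}" "t \<noteq> r"
    then show "0 \<le> poly S1 t"
      using sign[of t] assms(1) by (simp add: zero_le_mult_iff)
  qed (fact assms(2))
  moreover have "\<forall>t\<in>{0..r}. 0 \<le> poly (- S1) t"
  proof (rule poly_nonneg_on_Icc_off_point[where c = r])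
    fix t assume "t \<in> {0..r}" "t \<noteq> r"
    then show "0 \<le> poly (- S1) t"
      using sign[of t] assms(2) by (simp add: zero_le_mult_iff)
  qed (fact assms(1))
  ultimately have "0 \<le> poly S1 r" "0 \<le> - poly S1 r"
    using assms(1,2) by auto
  then have "poly S1 r = 0"
    by linarith
  then obtain S2 where "S1 = [:-r, 1:] * S2"
    by (auto simp: poly_eq_0_iff_dvd)
  then show ?thesis
    unfolding S1 power2_eq_square by (simp only: mult.assoc[symmetric] dvd_triv_left)
qed

lemma nonneg_poly_real_root_factor:
  fixes S :: "real poly"
  assumes "poly S r = 0" and nonneg: "\<forall>t\<in>{0..1}. 0 \<le> poly S t"
  obtains F S' where "S = F * S'" "0 < degree F" "parity_sos (degree F) (F \<circ>\<^sub>p [:0, 0, 1:])"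
    "\<forall>t\<in>{0..1}. 0 \<le> poly S' t"
proof -
  obtain S1 where S1: "S = [:-r, 1:] * S1"
    using assms(1) by (auto simp: poly_eq_0_iff_dvd)
  have "poly S t = (t - r) * poly S1 t" for t
    by (simp add: S1 algebra_simps)
  with nonneg have sign: "0 \<le> (t - r) * poly S1 t" if "t \<in> {0..1}" for t
    using that by metis
  consider "r \<le> 0" | "1 \<le> r" | "0 < r" "r < 1"
    by linarith
  then show thesis
  proof cases
    case 1
    have "\<forall>t\<in>{0..1}. 0 \<le> poly S1 t"
    proof (rule poly_nonneg_on_Icc_off_point[where c = 0])
      fix t :: real assume "t \<in> {0..1}" "t \<noteq> 0"
      then show "0 \<le> poly S1 t"
        using sign[of t] 1 by (simp add: zero_le_mult_iff)
    qed simp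
    moreover have "parity_sos 1 ([:-r, 1:] \<circ>\<^sub>p [:0, 0, 1:])"
      using 1 by (intro parity_sos_linear) simp_all
    ultimately show thesis
      by (intro that[OF S1]) simp_all
  next
    case 2
    have "\<forall>t\<in>{0..1}. 0 \<le> poly (- S1) t"
    proof (rule poly_nonneg_on_Icc_off_point[where c = 1])
      fix t :: real assume "t \<in> {0..1}" "t \<noteq> 1"
      then show "0 \<le> poly (- S1) t"
        using sign[of t] 2 by (simp add: zero_le_mult_iff)
    qed simp
    moreover have "parity_sos 1 ([:r, -1:] \<circ>\<^sub>p [:0, 0, 1:])"
      using 2 by (intro parity_sos_linear) simp_all
    moreover have S': "S = [:r, -1:] * - S1"
      by (simp add: S1)
    ultimately show thesis
      by (intro that[OF S']) simp_all
  next
    case 3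
    obtain S2 where S2: "S = [:-r, 1:]\<^sup>2 * S2"
      using nonneg_poly_interior_root_double[OF 3 assms] by (elim dvdE)
    have "\<forall>t\<in>{0..1}. 0 \<le> poly S2 t"
    proof (rule poly_nonneg_on_Icc_off_point[where c = r])
      fix t :: real assume "t \<in> {0..1}" "t \<noteq> r"
      then show "0 \<le> poly S2 t"
        using nonneg S2 by (auto simp: zero_le_mult_iff)
    qed simp
    moreover have "[:-r, 1:]\<^sup>2 = [:(cmod (of_real r))\<^sup>2, -2 * Re (of_real r), 1:]"
      by (simp add: power2_eq_square)
    ultimately show thesis
      using parity_sos_quadratic[of "of_real r"]
      by (intro that[OF S2]) (simp_all add: numeral_2_eq_2)
  qed
qed

lemma map_poly_of_real_add:
  "map_poly complex_of_real (p + q) = map_poly of_real p + map_poly of_real q"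
  by (rule poly_eqI) (simp add: coeff_map_poly)

lemma map_poly_of_real_mult:
  "map_poly complex_of_real (p * q) = map_poly of_real p * map_poly of_real q"
  by (rule poly_eqI) (simp add: coeff_map_poly coeff_mult of_real_sum)

lemma poly_map_poly_of_real: "poly (map_poly complex_of_real p) (of_real x) = of_real (poly p x)"
  by (induction p) (auto simp: map_poly_pCons)

lemma nonreal_root_quadratic_dvd:
  fixes S :: "real poly"
  assumes root: "poly (map_poly complex_of_real S) z = 0" and "Im z \<noteq> 0"
  shows "[:(cmod z)\<^sup>2, -2 * Re z, 1:] dvd S"
proof -
  define q where "q = [:(cmod z)\<^sup>2, -2 * Re z, 1:]"
  define m where "m = S mod q"
  have "poly (map_poly complex_of_real q) z = 0"
    unfolding q_def cmod_power2
    by (simp add: map_poly_pCons complex_eq_iff power2_eq_square algebra_simps)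
  moreover have "map_poly complex_of_real S
      = map_poly of_real q * map_poly of_real (S div q) + map_poly of_real m"
    unfolding map_poly_of_real_mult[symmetric] map_poly_of_real_add[symmetric] m_def by simp
  ultimately have m_root: "poly (map_poly complex_of_real m) z = 0"
    using root by simp
  have "degree m < 2"
    using degree_mod_less[of q S] by (cases "m = 0") (simp_all add: m_def q_def)
  then have m: "m = [:coeff m 0, coeff m 1:]"
    by (intro poly_eqI) (auto simp: coeff_pCons coeff_eq_0 split: nat.split)
  have "poly (map_poly complex_of_real m) z = of_real (coeff m 0) + of_real (coeff m 1) * z"
    by (subst m) (simp add: map_poly_pCons)
  with m_root have "of_real (coeff m 0) + of_real (coeff m 1) * z = 0"
    by simp
  with \<open>Im z \<noteq> 0\<close> have "coeff m 0 = 0" "coeff m 1 = 0"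
    by (auto simp: complex_eq_iff)
  with m have "m = 0"
    by simp
  then show ?thesis
    by (simp add: m_def q_def mod_eq_0_iff_dvd)
qed

lemma nonneg_poly_factor:
  fixes S :: "real poly"
  assumes "0 < degree S" and nonneg: "\<forall>t\<in>{0..1}. 0 \<le> poly S t"
  obtains F S' where "S = F * S'" "0 < degree F" "parity_sos (degree F) (F \<circ>\<^sub>p [:0, 0, 1:])"
    "\<forall>t\<in>{0..1}. 0 \<le> poly S' t"
proof -
  have "degree (map_poly complex_of_real S) = degree S"
    by (simp add: degree_map_poly)
  then obtain z where root: "poly (map_poly complex_of_real S) z = 0"
    using fundamental_theorem_of_algebra assms(1) constant_degree by (metis neq0_conv)
  show thesis
  proof (cases "Im z = 0")
    case True
    then have "z = of_real (Re z)"
      by (simp add: complex_eq_iff)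
    with root have "poly S (Re z) = 0"
      by (metis poly_map_poly_of_real of_real_eq_0_iff)
    from nonneg_poly_real_root_factor[OF this nonneg] that show thesis
      by blast
  next
    case False
    define q where "q = [:(cmod z)\<^sup>2, -2 * Re z, 1:]"
    obtain S' where S': "S = q * S'"
      using nonreal_root_quadratic_dvd[OF root False] by (auto simp: q_def)
    have "poly q t = (t - Re z)\<^sup>2 + (Im z)\<^sup>2" for t
      unfolding q_def cmod_power2 by (simp add: power2_eq_square algebra_simps)
    with False have "0 < poly q t" for t
      by (simp add: add_nonneg_pos)
    with nonneg have "\<forall>t\<in>{0..1}. 0 \<le> poly S' t"
      by (simp add: S' zero_le_mult_iff) (meson not_le)
    then show thesis
      using parity_sos_quadratic[of z]
      by (intro that[OF S']) (simp_all add: q_def numeral_2_eq_2)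
  qed
qed

lemma parity_sos_of_nonneg:
  fixes S :: "real poly"
  assumes "degree S \<le> k" "\<forall>t\<in>{0..1}. 0 \<le> poly S t"
  shows "parity_sos k (S \<circ>\<^sub>p [:0, 0, 1:])"
  using assms
proof (induction "degree S" arbitrary: S k rule: less_induct)
  case less
  show ?case
  proof (cases "degree S = 0")
    case True
    then obtain c where S: "S = [:c:]"
      by (meson degree_eq_zeroE)
    with less.prems(2) have "0 \<le> c"
      by auto
    then show ?thesis
      using parity_sos_mono[OF parity_sos_const] by (simp add: S pcompose_pCons)
  next
    case False
    then obtain F S' where S: "S = F * S'"
      and F: "0 < degree F" "parity_sos (degree F) (F \<circ>\<^sub>p [:0, 0, 1:])"
      and S': "\<forall>t\<in>{0..1}. 0 \<le> poly S' t"
      using nonneg_poly_factor less.prems(2) by blast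
    with False have "F \<noteq> 0" "S' \<noteq> 0"
      by auto
    with S have "degree S = degree F + degree S'"
      by (simp add: degree_mult_eq)
    with F less.prems(1) have "parity_sos (k - degree F) (S' \<circ>\<^sub>p [:0, 0, 1:])"
      by (intro less.hyps[OF _ _ S']) simp_all
    from parity_sos_mult[OF F(2) this] show ?thesis
      using \<open>degree S = degree F + degree S'\<close> less.prems(1) by (simp add: S pcompose_mult)
  qed
qed

lemma parity_sos_complement:
  fixes P Q :: "real poly"
  assumes deg: "deg_le P (int k)" "deg_le Q (int k - 1)"
    and sym: "P \<circ>\<^sub>p [:0, -1:] = smult ((-1) ^ k) P" "Q \<circ>\<^sub>p [:0, -1:] = smult ((-1) ^ Suc k) Q"
    and bound: "\<forall>x\<in>{-1..1}. (poly P x)\<^sup>2 + (1 - x\<^sup>2) * (poly Q x)\<^sup>2 \<le> 1"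
  shows "parity_sos k (1 - P\<^sup>2 - (1 - [:0, 0, 1:]) * Q\<^sup>2)"
proof -
  define R where "R = 1 - P\<^sup>2 - (1 - [:0, 0, 1:]) * Q\<^sup>2"
  have "R \<circ>\<^sub>p [:0, -1:] = R"
    by (simp add: R_def pcompose_diff pcompose_mult pcompose_1 pcompose_pCons power2_eq_square sym)
  then have "even_poly R"
    using pcompose_neg_eq_smult_iff[of R 0] by (simp add: even_poly_def)
  then obtain S where S: "R = S \<circ>\<^sub>p [:0, 0, 1:]" and coeff_S: "\<And>j. coeff S j = coeff R (2 * j)"
    using even_poly_eq_pcompose_x_sq by metis
  have "deg_le (1 - P\<^sup>2 - (1 - [:0, 0, 1:]) * Q\<^sup>2) (2 * int k)"
    unfolding power2_eq_square
  proof (intro deg_le_diff)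
    show "deg_le (1 :: real poly) (2 * int k)"
      by (simp add: deg_le_def coeff_1)
    show "deg_le (P * P) (2 * int k)"
      using deg_le_mult[OF deg(1) deg(1)] by simp
    show "deg_le ((1 - [:0, 0, 1:]) * (Q * Q)) (2 * int k)"
      using deg_le_mult[OF deg_le_one_minus_x_sq deg_le_mult[OF deg(2) deg(2)]] by simp
  qed
  then have "degree S \<le> k"
    by (intro degree_le) (auto simp: coeff_S R_def deg_le_def)
  moreover have "\<forall>t\<in>{0..1}. 0 \<le> poly S t"
  proof
    fix t :: real assume t: "t \<in> {0..1}"
    then have "poly S t = poly R (sqrt t)"
      by (simp add: S poly_pcompose)
    also have "\<dots> = 1 - ((poly P (sqrt t))\<^sup>2 + (1 - (sqrt t)\<^sup>2) * (poly Q (sqrt t))\<^sup>2)"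
      by (simp add: R_def power2_eq_square)
    also have "\<dots> \<ge> 0"
    proof -
      have "sqrt t \<in> {-1..1}"
        using t by (auto intro: order_trans[of _ 0])
      then show ?thesis
        using bound by auto
    qed
    finally show "0 \<le> poly S t" .
  qed
  ultimately show ?thesis
    using parity_sos_of_nonneg S by (simp add: R_def)
qed

definition Complex_poly :: "real poly \<Rightarrow> real poly \<Rightarrow> complex poly" where
  "Complex_poly A B = map_poly of_real A + smult \<i> (map_poly of_real B)"

lemma coeff_Complex_poly: "coeff (Complex_poly A B) j = Complex (coeff A j) (coeff B j)"
  by (simp add: Complex_poly_def coeff_map_poly complex_eq_iff)

lemma poly_Complex_poly: "poly (Complex_poly A B) (of_real x) = Complex (poly A x) (poly B x)"
  by (simp add: Complex_poly_def poly_map_poly_of_real complex_eq_iff)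

lemma coeff_Re_poly: "coeff (Re_poly P) j = Re (coeff P j)"
  by (simp add: Re_poly_def coeff_map_poly)

lemma poly_Re_poly: "poly (Re_poly P) x = Re (poly P (of_real x))"
  unfolding Re_poly_def by (induction P) (auto simp: map_poly_pCons)

lemma Re_poly_Complex_poly: "Re_poly (Complex_poly A B) = A"
  by (simp add: poly_eq_iff coeff_Re_poly coeff_Complex_poly)

lemma deg_le_Re_poly: "deg_le P d \<Longrightarrow> deg_le (Re_poly P) d"
  by (simp add: deg_le_def coeff_Re_poly)

lemma has_parity_Re_poly: "has_parity P z \<Longrightarrow> has_parity (Re_poly P) z"
  by (auto simp: has_parity_def even_poly_def odd_poly_def coeff_Re_poly split: if_splits)

lemma deg_le_Complex_poly: "deg_le A d \<Longrightarrow> deg_le B d \<Longrightarrow> deg_le (Complex_poly A B) d"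
  by (simp add: deg_le_def coeff_Complex_poly complex_eq_iff)

lemma has_parity_Complex_poly:
  "has_parity A z \<Longrightarrow> has_parity B z \<Longrightarrow> has_parity (Complex_poly A B) z"
  by (auto simp: has_parity_def even_poly_def odd_poly_def coeff_Complex_poly complex_eq_iff
      split: if_splits)

lemma Re_poly_weighted_sq_le:
  assumes "x \<in> {-1..1}"
  shows "(poly (Re_poly P) x)\<^sup>2 + (1 - x\<^sup>2) * (poly (Re_poly Q) x)\<^sup>2
    \<le> (cmod (poly P (of_real x)))\<^sup>2 + (1 - x\<^sup>2) * (cmod (poly Q (of_real x)))\<^sup>2"
proof -
  have "x\<^sup>2 \<le> 1"
    using assms by (simp add: abs_square_le_1 abs_le_iff)
  moreover have "(Re w)\<^sup>2 \<le> (cmod w)\<^sup>2" for w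
    by (simp add: cmod_power2)
  ultimately show ?thesis
    unfolding poly_Re_poly by (intro add_mono mult_left_mono) simp_all
qed

theorem mainTheorem4:
  fixes k :: nat and Pt Qt :: "real poly"
  shows "(\<exists>P Q :: complex poly.
            deg_le P (int k) \<and> deg_le Q (int k - 1) \<and>
            has_parity P (int k mod 2) \<and> has_parity Q ((int k - 1) mod 2) \<and>
            (\<forall>x::real\<in>{-1..1}.
               (cmod (poly P (complex_of_real x)))\<^sup>2
               + (1 - x\<^sup>2) * (cmod (poly Q (complex_of_real x)))\<^sup>2 = 1) \<and>
            Re_poly P = Pt \<and> Re_poly Q = Qt)
    \<longleftrightarrow>
         (deg_le Pt (int k) \<and> deg_le Qt (int k - 1) \<and>
          has_parity Pt (int k mod 2) \<and> has_parity Qt ((int k - 1) mod 2) \<and>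
          (\<forall>x::real\<in>{-1..1}. (poly Pt x)\<^sup>2 + (1 - x\<^sup>2) * (poly Qt x)\<^sup>2 \<le> 1))"
    (is "?lhs \<longleftrightarrow> ?rhs")
proof
  assume ?lhs
  then show ?rhs
    using deg_le_Re_poly has_parity_Re_poly Re_poly_weighted_sq_le by metis
next
  assume rhs: ?rhs
  then have "parity_sos k (1 - Pt\<^sup>2 - (1 - [:0, 0, 1:]) * Qt\<^sup>2)"
    by (intro parity_sos_complement)
      (simp_all add: has_parity_iff_pcompose_neg int_minus_one_mod_2 del: of_nat_Suc)
  then obtain A B where "deg_le A (int k)" "deg_le B (int k - 1)"
    "has_parity A (int k mod 2)" "has_parity B ((int k - 1) mod 2)"
    and AB: "1 - Pt\<^sup>2 - (1 - [:0, 0, 1:]) * Qt\<^sup>2 = A\<^sup>2 + (1 - [:0, 0, 1:]) * B\<^sup>2"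
    unfolding parity_sos_def has_parity_iff_pcompose_neg int_minus_one_mod_2 by blast
  moreover have "(poly Pt x)\<^sup>2 + (poly A x)\<^sup>2 + (1 - x\<^sup>2) * ((poly Qt x)\<^sup>2 + (poly B x)\<^sup>2) = 1" for x
    using arg_cong[OF AB, of "\<lambda>p. poly p x"] by (simp add: power2_eq_square algebra_simps)
  ultimately show ?lhs
    using rhs
    by (intro exI[of _ "Complex_poly Pt A"] exI[of _ "Complex_poly Qt B"])
      (simp add: deg_le_Complex_poly has_parity_Complex_poly Re_poly_Complex_poly poly_Complex_poly
        cmod_power2 algebra_simps)
qed

end
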